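(* Let $\varphi$ be a morphism of class $P_{ret}$ defined on $\{0,1\}^*$. Then $\varphi$ is conjugate to a standard special $P$-morphism.
   Context: For a finite word $w$, $\overline w$ denotes its reversal; $w$ is a palindrome if $w=\overline w$. A morphism $\varphi:\mathcal B^*\to\mathcal A^*$ is of class $P_{ret}$ if there exists a palindrome $p\in\mathcal A^*$ such that: (a) $\varphi(b)p$ is a palindrome for every $b\in\mathcal B$; (b) for every $b\in\mathcal B$, $\varphi(b)p$ contains exactly two occurrences of $p$, one as a prefix and one as a suffix; (c) $\varphi(b)\ne\varphi(c)$ for distinct $b,c\in\mathcal B$. A morphism $\sigma$ is conjugate to $\varphi$ (same domain alphabet) if there is a word $w$ such that either for every letter $a$, $\varphi(a)$ has prefix $w$ and $\sigma(a)=w^{-1}\varphi(a)w$, or for every letter $a$, $\varphi(a)$ has suffix $w$ and $\sigma(a)=w\varphi(a)w^{-1}$. A morphism $\sigma$ is a standard $P$-morphism if there is a palindrome $r$ (possibly empty) such that for every letter $x$, $\sigma(x)=rq_x$ where each $q_x$ is a palindrome; if $r$ is non-empty, some $q_x$ may be empty or of the form $q_x=\pi_x^{-1}$ with $\pi_x$ a proper palindromic suffix of $r$ (meaning $\sigma(x)$ is $r$ with the suffix $\pi_x$ removed). It is special if (1) the words $\sigma(x)=rq_x$ end with pairwise different letters, and (2) whenever $\sigma(x)r=rq_xr$ (for a letter $x$) occurs in some $\sigma(y_1y_2\cdots y_n)r$, this occurrence is $\sigma(y_m)r$ for some $1\le m\le n$ (i.e., it starts at position $|\sigma(y_1\cdots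 y_{m-1})|$). *)

theory Defs
  imports "HOL-Library.Sublist"
begin

(* Words are lists; a morphism B^* -> A^* is given by its values on letters,
   phi :: 'b => 'a list, extended by morph_ext. *)

definition morph_ext :: "('b \<Rightarrow> 'a list) \<Rightarrow> 'b list \<Rightarrow> 'a list" where
  "morph_ext f ws = concat (map f ws)"

definition palindrome :: "'a list \<Rightarrow> bool" where
  "palindrome w \<longleftrightarrow> rev w = w"

definition occ :: "'a list \<Rightarrow> 'a list \<Rightarrow> nat set" where
  "occ p w = {i. i + length p \<le> length w \<and> take (length p) (drop i w) = p}"

definition class_Pret :: "('b \<Rightarrow> 'a list) \<Rightarrow> bool" where
  "class_Pret phi \<longleftrightarrow> (\<exists>p. palindrome p \<and>
     (\<forall>b. palindrome (phi b @ p)) \<and>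
     (\<forall>b. card (occ p (phi b @ p)) = 2 \<and> prefix p (phi b @ p) \<and> suffix p (phi b @ p)) \<and>
     (\<forall>b c. b \<noteq> c \<longrightarrow> phi b \<noteq> phi c))"

definition conjugate :: "('b \<Rightarrow> 'a list) \<Rightarrow> ('b \<Rightarrow> 'a list) \<Rightarrow> bool" where
  "conjugate sigma phi \<longleftrightarrow> (\<exists>w.
     (\<forall>a. prefix w (phi a) \<and> sigma a = drop (length w) (phi a) @ w) \<or>
     (\<forall>a. suffix w (phi a) \<and> sigma a = w @ take (length (phi a) - length w) (phi a)))"

definition standard_P_wrt :: "'a list \<Rightarrow> ('b \<Rightarrow> 'a list) \<Rightarrow> bool" where
  "standard_P_wrt r sigma \<longleftrightarrow> palindrome r \<and>
     (\<forall>x. (\<exists>q. palindrome q \<and> sigma x = r @ q) \<or>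
          (r \<noteq> [] \<and> (\<exists>\<pi>. palindrome \<pi> \<and> suffix \<pi> r \<and> \<pi> \<noteq> r \<and>
                          sigma x = take (length r - length \<pi>) r)))"

definition special_wrt :: "'a list \<Rightarrow> ('b \<Rightarrow> 'a list) \<Rightarrow> bool" where
  "special_wrt r sigma \<longleftrightarrow>
     (\<forall>x. sigma x \<noteq> []) \<and>
     (\<forall>x y. x \<noteq> y \<longrightarrow> last (sigma x) \<noteq> last (sigma y)) \<and>
     (\<forall>x ys i. i \<in> occ (sigma x @ r) (morph_ext sigma ys @ r) \<longrightarrow>
        (\<exists>m < length ys. i = length (morph_ext sigma (take m ys))))"

definition standard_special_P :: "('b \<Rightarrow> 'a list) \<Rightarrow> bool" where
  "standard_special_P sigma \<longleftrightarrow> (\<exists>r. standard_P_wrt r sigma \<and> special_wrt r sigma)"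

end

theory Submission imports Defs begin

text \<open>
Since \<open>\<phi>(0) p\<close> and \<open>\<phi>(1) p\<close> contain \<open>p\<close> only as prefix and suffix, neither is a prefix
of the other, so they share a longest common prefix \<open>p e\<close> followed by two different letters.
Reading these palindromes backwards, both \<open>\<phi>(b)\<close> end with \<open>d = e\<^sup>R\<close> preceded by different
letters. Moving \<open>d\<close> from the end to the front gives the conjugate \<open>\<sigma>(b) = d \<phi>(b) d\<^sup>-\<^sup>1\<close>.
With \<open>r = d p d\<^sup>R\<close> the word \<open>\<sigma>(b) r = d \<phi>(b) p d\<^sup>R\<close> is a palindrome beginning with \<open>r\<close>,
which makes \<open>\<sigma>\<close> standard; and an occurrence of \<open>\<sigma>(x) r\<close> in \<open>\<sigma>(y\<^sub>1\<cdots>y\<^sub>n) r\<close> yields an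
occurrence of \<open>p\<close> in \<open>\<phi>(y\<^sub>1\<cdots>y\<^sub>n) p\<close>, and those only sit at the boundaries of the
factors \<open>\<phi>(y\<^sub>m)\<close>.
\<close>

lemma occ_iff: "i \<in> occ p w \<longleftrightarrow> (\<exists>u v. w = u @ p @ v \<and> length u = i)"
proof
  assume "i \<in> occ p w"
  hence h: "i + length p \<le> length w" "take (length p) (drop i w) = p" by (auto simp: occ_def)
  have "w = take i w @ take (length p) (drop i w) @ drop (length p) (drop i w)"
    by (metis append_take_drop_id)
  with h show "\<exists>u v. w = u @ p @ v \<and> length u = i"
    by (metis length_take min.absorb2 le_add1 order.trans)
next
  assume "\<exists>u v. w = u @ p @ v \<and> length u = i"
  then show "i \<in> occ p w" by (auto simp: occ_def)
qed

lemma finite_occ: "finite (occ p w)"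
  by (rule finite_subset[of _ "{..length w}"]) (auto simp: occ_def)

lemma occ_prefix_pattern: "i \<in> occ q w \<Longrightarrow> prefix p q \<Longrightarrow> i \<in> occ p w"
  unfolding occ_iff prefix_def by (metis append.assoc)

lemma occ_append_pattern: "i \<in> occ (a @ b) w \<Longrightarrow> i + length a \<in> occ b w"
  unfolding occ_iff by (metis append.assoc length_append)

lemma occ_append_left: "i \<in> occ p (d @ w) \<Longrightarrow> length d \<le> i \<Longrightarrow> i - length d \<in> occ p w"
  unfolding occ_def by (auto simp: add.commute)

lemma occ_append_right: "i \<in> occ p (w @ z) \<Longrightarrow> i + length p \<le> length w \<Longrightarrow> i \<in> occ p w"
  unfolding occ_def by auto

lemma return_word_nonempty:
  assumes "card (occ p (w @ p)) = 2"
  shows "w \<noteq> []"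
proof
  assume "w = []"
  hence "occ p (w @ p) = {0}" by (auto simp: occ_def)
  with assms show False by simp
qed

lemma occ_return_word:
  assumes card: "card (occ p (w @ p)) = 2" and pre: "prefix p (w @ p)"
  shows "occ p (w @ p) = {0, length w}"
proof -
  have "0 \<in> occ p (w @ p)" using pre unfolding occ_iff prefix_def by force
  moreover have "length w \<in> occ p (w @ p)" unfolding occ_iff by blast
  ultimately have sub: "{0, length w} \<subseteq> occ p (w @ p)" by auto
  have "card {0, length w} = 2" using return_word_nonempty[OF card] by simp
  with card_subset_eq[OF finite_occ sub] card show ?thesis by simp
qed

lemma return_word_not_prefix:
  assumes occ_v: "occ p (v @ p) = {0, length v}" and "u \<noteq> []" and "u \<noteq> v"
  shows "\<not> prefix (u @ p) (v @ p)"
proof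
  assume "prefix (u @ p) (v @ p)"
  then obtain z where z: "v @ p = u @ p @ z" by (auto simp: prefix_def)
  with \<open>u \<noteq> v\<close> have "z \<noteq> []" by auto
  with z have "length u < length v"
    by (metis add_less_cancel_right append_assoc length_append length_greater_0_conv
        less_add_same_cancel1)
  moreover have "length u \<in> occ p (v @ p)" unfolding occ_iff using z by auto
  ultimately show False using occ_v \<open>u \<noteq> []\<close> by auto
qed

lemma prefix_before_mismatch:
  assumes "prefix p (c @ x # s)" and "prefix p (c @ y # t)" and "x \<noteq> y"
  shows "prefix p c"
proof (rule ccontr)
  assume "\<not> prefix p c"
  with assms(1) have "strict_prefix c p"
    by (metis prefix_order.le_less prefix_same_cases prefixI)
  then obtain z w where "p = c @ z # w"
    by (metis strict_prefixE')
  with assms show False by (auto simp: prefix_def)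
qed

lemma palindrome_unfold:
  assumes "palindrome p" and "palindrome (w @ p)" and "w @ p = p @ e @ x # s"
  shows "w = rev s @ x # rev e"
proof -
  have "w @ p = rev (w @ p)" using assms(2) by (simp add: palindrome_def)
  also have "\<dots> = (rev s @ x # rev e) @ p" using assms(1,3) by (simp add: palindrome_def)
  finally show ?thesis by simp
qed

lemma palindromic_return_words_common_suffix:
  assumes pal_p: "palindrome p"
    and pal: "palindrome (w\<^sub>0 @ p)" "palindrome (w\<^sub>1 @ p)"
    and pre: "prefix p (w\<^sub>0 @ p)" "prefix p (w\<^sub>1 @ p)"
    and par: "(w\<^sub>0 @ p) \<parallel> (w\<^sub>1 @ p)"
  obtains d u\<^sub>0 u\<^sub>1 x\<^sub>0 x\<^sub>1 where "x\<^sub>0 \<noteq> x\<^sub>1"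
    and "w\<^sub>0 = u\<^sub>0 @ x\<^sub>0 # d" and "w\<^sub>1 = u\<^sub>1 @ x\<^sub>1 # d"
    and "prefix (p @ rev d) (w\<^sub>0 @ p)" and "prefix (p @ rev d) (w\<^sub>1 @ p)"
proof -
  obtain c x\<^sub>0 s\<^sub>0 x\<^sub>1 s\<^sub>1 where "x\<^sub>0 \<noteq> x\<^sub>1"
    and w\<^sub>0: "w\<^sub>0 @ p = c @ x\<^sub>0 # s\<^sub>0" and w\<^sub>1: "w\<^sub>1 @ p = c @ x\<^sub>1 # s\<^sub>1"
    using parallel_decomp[OF par] by blast
  have "prefix p c" using prefix_before_mismatch pre \<open>x\<^sub>0 \<noteq> x\<^sub>1\<close> w\<^sub>0 w\<^sub>1 by metis
  then obtain e where c: "c = p @ e" by (auto simp: prefix_def)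
  show thesis
  proof
    show "w\<^sub>0 = rev s\<^sub>0 @ x\<^sub>0 # rev e" using palindrome_unfold[OF pal_p pal(1)] w\<^sub>0 c by simp
    show "w\<^sub>1 = rev s\<^sub>1 @ x\<^sub>1 # rev e" using palindrome_unfold[OF pal_p pal(2)] w\<^sub>1 c by simp
  qed (use \<open>x\<^sub>0 \<noteq> x\<^sub>1\<close> w\<^sub>0 w\<^sub>1 c in auto)
qed

lemma morph_ext_Nil [simp]: "morph_ext f [] = []"
  by (simp add: morph_ext_def)

lemma morph_ext_Cons [simp]: "morph_ext f (y # ys) = f y @ morph_ext f ys"
  by (simp add: morph_ext_def)

lemma prefix_morph_ext: "(\<And>y. prefix p (f y @ p)) \<Longrightarrow> prefix p (morph_ext f ys @ p)"
proof (induction ys)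
  case (Cons y ys)
  then obtain z where "morph_ext f ys @ p = p @ z" by (auto simp: prefix_def)
  moreover obtain z' where "f y @ p = p @ z'" using Cons.prems by (auto simp: prefix_def)
  ultimately show ?case by (simp add: prefix_def) (metis append.assoc)
qed simp

lemma morph_ext_conjugate:
  assumes "\<And>y. \<sigma> y @ d = d @ f y"
  shows "morph_ext \<sigma> ys @ d = d @ morph_ext f ys"
  by (induction ys) (simp_all, metis assms)

lemma length_morph_ext_eq:
  "(\<And>y. length (\<sigma> y) = length (f y)) \<Longrightarrow> length (morph_ext \<sigma> ys) = length (morph_ext f ys)"
  by (induction ys) simp_all

lemma occ_morph_ext_synchronized:
  assumes occ: "\<And>y. occ p (f y @ p) = {0, length (f y)}" and pre: "\<And>y. prefix p (f y @ p)"
  shows "i \<in> occ p (morph_ext f ys @ p) \<Longrightarrow> i < length (morph_ext f ys) \<Longrightarrow>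
         \<exists>m<length ys. i = length (morph_ext f (take m ys))"
proof (induction ys arbitrary: i)
  case (Cons y ys)
  show ?case
  proof (cases "i < length (f y)")
    case True
    obtain z where "morph_ext f ys @ p = p @ z"
      using prefix_morph_ext[of p f ys] pre by (auto simp: prefix_def)
    with Cons.prems(1) have "i \<in> occ p ((f y @ p) @ z)" by simp
    hence "i \<in> occ p (f y @ p)" by (rule occ_append_right) (use True in simp)
    hence "i = 0" using occ True by auto
    thus ?thesis by (intro exI[of _ 0]) simp
  next
    case False
    have "i - length (f y) \<in> occ p (morph_ext f ys @ p)"
      using occ_append_left[of i p "f y"] Cons.prems(1) False by simp
    moreover have "i - length (f y) < length (morph_ext f ys)" using Cons.prems(2) False by simp
    ultimately obtain m where "m < length ys" "i - length (f y) = length (morph_ext f (take m ys))"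
      using Cons.IH by blast
    thus ?thesis using False by (intro exI[of _ "Suc m"]) simp
  qed
qed simp

definition rotate_suffix :: "'a list \<Rightarrow> ('b \<Rightarrow> 'a list) \<Rightarrow> 'b \<Rightarrow> 'a list" where
  "rotate_suffix d f b = d @ take (length (f b) - length d) (f b)"

lemma conjugate_rotate_suffix: "(\<And>b. suffix d (f b)) \<Longrightarrow> conjugate (rotate_suffix d f) f"
  unfolding conjugate_def rotate_suffix_def by blast

lemma rotate_suffix_append: "suffix d (f b) \<Longrightarrow> rotate_suffix d f b @ d = d @ f b"
  by (auto simp: rotate_suffix_def suffix_def)

lemma palindrome_prefix_cases:
  assumes r: "palindrome r" and sr: "palindrome (s @ r)" and pre: "prefix r (s @ r)"
    and "s \<noteq> []"
  shows "(\<exists>q. palindrome q \<and> s = r @ q) \<or>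
          (r \<noteq> [] \<and> (\<exists>\<pi>. palindrome \<pi> \<and> suffix \<pi> r \<and> \<pi> \<noteq> r \<and>
                          s = take (length r - length \<pi>) r))"
proof -
  from pre obtain z where z: "s @ r = r @ z" by (auto simp: prefix_def)
  have rr: "rev r = r" and rsr: "r @ rev s = s @ r"
    using r sr by (simp_all add: palindrome_def)
  show ?thesis
  proof (cases "length r \<le> length s")
    case True
    then obtain q where q: "s = r @ q" using z
      by (metis append_eq_append_conv_if append_eq_conv_conj)
    with rsr rr have "palindrome q" by (simp add: palindrome_def)
    thus ?thesis using q by blast
  next
    case False
    define \<pi> where "\<pi> = drop (length s) r"
    have rs: "r = s @ \<pi>" using z False unfolding \<pi>_def
      by (metis append_eq_append_conv_if append_take_drop_id)
    with rsr have "\<pi> @ rev s = s @ \<pi>" by simp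
    moreover have "rev \<pi> @ rev s = s @ \<pi>" using rr rs by (metis rev_append)
    ultimately have "palindrome \<pi>" by (metis append_same_eq palindrome_def)
    thus ?thesis using rs \<open>s \<noteq> []\<close> by (auto simp: suffix_def)
  qed
qed

lemma occ_conjugate_synchronized:
  assumes conj: "\<And>y. \<sigma> y @ d = d @ f y"
    and occ: "\<And>y. occ p (f y @ p) = {0, length (f y)}" and pre: "\<And>y. prefix p (f y @ p)"
    and ne: "\<And>y. f y \<noteq> []"
    and i: "i \<in> occ (\<sigma> x @ d @ p @ rev d) (morph_ext \<sigma> ys @ d @ p @ rev d)"
  shows "\<exists>m<length ys. i = length (morph_ext \<sigma> (take m ys))"
proof -
  have len: "length (\<sigma> y) = length (f y)" for y using arg_cong[OF conj[of y], of length] by simp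
  have whole: "morph_ext \<sigma> ys @ d @ p @ rev d = d @ (morph_ext f ys @ p) @ rev d"
    using morph_ext_conjugate[of \<sigma> d f ys, OF conj] by (metis append.assoc)
  have "i + length (\<sigma> x @ d @ p @ rev d) \<le> length (morph_ext \<sigma> ys @ d @ p @ rev d)"
    using i unfolding occ_def by blast
  hence "i + length (f x) \<le> length (morph_ext f ys)"
    using length_morph_ext_eq[of \<sigma> f ys, OF len] len[of x] by simp
  moreover have "0 < length (f x)" using ne by simp
  ultimately have i_lt: "i < length (morph_ext f ys)" by linarith
  have "prefix (d @ p) (\<sigma> x @ d @ p @ rev d)"
    using pre[of x] conj[of x] unfolding prefix_def by (metis append.assoc)
  from occ_append_pattern[OF occ_prefix_pattern[OF i this]]
  have "i \<in> occ p ((morph_ext f ys @ p) @ rev d)"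
    using occ_append_left[of "i + length d" p d] whole by simp
  hence "i \<in> occ p (morph_ext f ys @ p)" by (rule occ_append_right) (use i_lt in simp)
  from occ_morph_ext_synchronized[of p f, OF occ pre this i_lt] length_morph_ext_eq[of \<sigma> f, OF len]
  show ?thesis by metis
qed

lemma standard_special_P_conjugate:
  assumes "palindrome p"
    and pal: "\<And>b. palindrome (f b @ p)"
    and occ: "\<And>b. occ p (f b @ p) = {0, length (f b)}"
    and pre: "\<And>b. prefix (p @ rev d) (f b @ p)"
    and conj: "\<And>b. \<sigma> b @ d = d @ f b"
    and ne: "\<And>b. \<sigma> b \<noteq> []"
    and last: "\<And>a b. a \<noteq> b \<Longrightarrow> last (\<sigma> a) \<noteq> last (\<sigma> b)"
  shows "standard_special_P \<sigma>"
proof -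
  define r where "r = d @ p @ rev d"
  have \<sigma>_r: "\<sigma> b @ r = d @ (f b @ p) @ rev d" for b
    using conj[of b] unfolding r_def by (metis append.assoc)
  have "palindrome r" using \<open>palindrome p\<close> by (simp add: r_def palindrome_def)
  moreover have "palindrome (\<sigma> b @ r)" for b
    using pal[of b] unfolding \<sigma>_r palindrome_def by simp
  moreover have "prefix r (\<sigma> b @ r)" for b
  proof -
    obtain z where "f b @ p = p @ rev d @ z" using pre[of b] by (auto simp: prefix_def)
    hence "\<sigma> b @ r = r @ z @ rev d" unfolding \<sigma>_r by (simp add: r_def)
    thus ?thesis by (rule prefixI)
  qed
  ultimately have "standard_P_wrt r \<sigma>"
    unfolding standard_P_wrt_def using palindrome_prefix_cases ne by blast
  moreover have "special_wrt r \<sigma>"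
  proof -
    have "f b \<noteq> []" for b using ne[of b] arg_cong[OF conj[of b], of length] by auto
    moreover have "prefix p (f b @ p)" for b using pre[of b] by (auto simp: prefix_def)
    ultimately show ?thesis
      using occ_conjugate_synchronized[of \<sigma> d f p, OF conj occ] ne last
      unfolding special_wrt_def r_def by blast
  qed
  ultimately show ?thesis unfolding standard_special_P_def by blast
qed

theorem lemma6p4:
  fixes phi :: "bool \<Rightarrow> 'a list"
  assumes "class_Pret phi"
  shows "\<exists>sigma. conjugate sigma phi \<and> standard_special_P sigma"
proof -
  obtain p where "palindrome p" and pal: "\<And>b. palindrome (phi b @ p)"
    and card: "\<And>b. card (occ p (phi b @ p)) = 2" and pre: "\<And>b. prefix p (phi b @ p)"
    and inj: "phi True \<noteq> phi False"
    using assms unfolding class_Pret_def by blast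
  have occ: "occ p (phi b @ p) = {0, length (phi b)}" for b
    using occ_return_word[OF card pre] .
  have "(phi True @ p) \<parallel> (phi False @ p)"
    using return_word_not_prefix[OF occ return_word_nonempty[OF card]] inj
    unfolding parallel_def by metis
  then obtain d u\<^sub>0 u\<^sub>1 x\<^sub>0 x\<^sub>1 where "x\<^sub>0 \<noteq> x\<^sub>1"
    and phi: "phi True = u\<^sub>0 @ x\<^sub>0 # d" "phi False = u\<^sub>1 @ x\<^sub>1 # d"
    and pre_d: "prefix (p @ rev d) (phi True @ p)" "prefix (p @ rev d) (phi False @ p)"
    by (rule palindromic_return_words_common_suffix[OF \<open>palindrome p\<close> pal[of True] pal[of False]
        pre[of True] pre[of False]])
  have pre_d: "prefix (p @ rev d) (phi b @ p)" for b using pre_d by (cases b) simp_all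
  have suffix: "suffix d (phi b)" for b using phi by (cases b) (auto simp: suffix_def)
  have "standard_special_P (rotate_suffix d phi)"
  proof (rule standard_special_P_conjugate[OF \<open>palindrome p\<close> pal occ pre_d])
    show "rotate_suffix d phi b @ d = d @ phi b" for b
      using rotate_suffix_append[of d phi b, OF suffix] .
    show "rotate_suffix d phi b \<noteq> []" for b by (cases b) (simp_all add: rotate_suffix_def phi)
    show "a \<noteq> b \<Longrightarrow> last (rotate_suffix d phi a) \<noteq> last (rotate_suffix d phi b)" for a b
      using \<open>x\<^sub>0 \<noteq> x\<^sub>1\<close> by (cases a; cases b) (simp_all add: rotate_suffix_def phi)
  qed
  with conjugate_rotate_suffix[of d phi, OF suffix] show ?thesis by blast
qed

end
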